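(* Let $v>0$, $q>0$ and let $\kappa\ge -q/4$ be real; put $s=\frac12+\sqrt{\frac{\kappa}{q}+\frac14}$. For each integer $n\ge0$ with $n+s<\sqrt{v/q}$, the function $$\psi_n(r)=e^{-\left(\frac{v}{2q(n+s)}-\frac{n+s}{2}\right)r}\left(1-q\,e^{-r}\right)^{s}\;{}_2F_1\!\left(-n,\,s+\frac{v}{q(n+s)};\,1-n-s+\frac{v}{q(n+s)};\,q\,e^{-r}\right)$$ satisfies, on $r\in(\log q,\infty)$, $$-\psi_n''(r)+\left(\frac{\kappa\,e^{-r}}{(1-q\,e^{-r})^2}-\frac{v\,e^{-r}}{1-q\,e^{-r}}\right)\psi_n(r)=\mathfrak E_n\,\psi_n(r),\qquad \mathfrak E_n=-\left(\frac{v}{2q(n+s)}-\frac{n+s}{2}\right)^2,$$ together with $\psi_n(\log q)=\psi_n(\infty)=0$. In particular, for $\kappa=q\,j(j+1)$ with $j\in\{0,1,2,\dots\}$ one has $s=j+1$ and $\mathfrak E_n=-\left(\frac{v}{2q(n+j+1)}-\frac{n+j+1}{2}\right)^2$.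
   Context: ${}_2F_1(\alpha,\beta;\gamma;z)=\sum_{k\ge0}\frac{(\alpha)_k(\beta)_k}{(\gamma)_k k!}z^k$ is the Gauss hypergeometric function, with $(a)_k$ the Pochhammer symbol; for $\alpha=-n$ it is a polynomial in $z$. *)

theory Defs
  imports "HOL-Analysis.Analysis"
begin

text \<open>Gauss hypergeometric function as its defining power series
  (for a = -n only finitely many terms are nonzero, so it is a polynomial).\<close>
definition hyp2F1 :: "real \<Rightarrow> real \<Rightarrow> real \<Rightarrow> real \<Rightarrow> real" where
  "hyp2F1 a b c z =
     (\<Sum>k. pochhammer a k * pochhammer b k / (pochhammer c k * fact k) * z ^ k)"

definition s_par :: "real \<Rightarrow> real \<Rightarrow> real" where
  "s_par q \<kappa> = 1/2 + sqrt (\<kappa> / q + 1/4)"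

definition E_n :: "real \<Rightarrow> real \<Rightarrow> real \<Rightarrow> nat \<Rightarrow> real" where
  "E_n v q \<kappa> n = - ((v / (2 * q * (n + s_par q \<kappa>)) - (n + s_par q \<kappa>) / 2) ^ 2)"

definition psi_n :: "real \<Rightarrow> real \<Rightarrow> real \<Rightarrow> nat \<Rightarrow> real \<Rightarrow> real" where
  "psi_n v q \<kappa> n r =
     (let s = s_par q \<kappa> in
      exp (- (v / (2 * q * (n + s)) - (n + s) / 2) * r)
      * (1 - q * exp (- r)) powr s
      * hyp2F1 (- real n) (s + v / (q * (n + s))) (1 - n - s + v / (q * (n + s))) (q * exp (- r)))"

definition potential :: "real \<Rightarrow> real \<Rightarrow> real \<Rightarrow> real \<Rightarrow> real" where
  "potential v q \<kappa> r = \<kappa> * exp (- r) / (1 - q * exp (- r)) ^ 2 - v * exp (- r) / (1 - q * exp (- r))"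

end

theory Submission
  imports Defs "HOL-Computational_Algebra.Polynomial" "HOL-Real_Asymp.Real_Asymp"
begin

text \<open>With \<open>z = q e\<^sup>-\<^sup>r\<close>, the substitution \<open>\<psi>(r) = e\<^sup>-\<^sup>\<alpha>\<^sup>r (1 - z)\<^sup>s F(z)\<close> turns the radial
  equation with energy \<open>-\<alpha>\<^sup>2\<close> and \<open>\<kappa> = q s (s - 1)\<close> into Gauss's hypergeometric equation for \<open>F\<close>
  with \<open>c = 1 + 2\<alpha>\<close>, \<open>a + b = 2\<alpha> + 2s\<close> and \<open>ab = s\<^sup>2 + 2\<alpha>s - v/q\<close>. For
  \<open>\<alpha> = v/(2q(n+s)) - (n+s)/2\<close> the roots are \<open>a = -n\<close> and \<open>b = s + v/(q(n+s))\<close>, so the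
  terminating series, a polynomial, is a solution. The factor \<open>(1 - z)\<^sup>s\<close> vanishes at
  \<open>r = log q\<close>, and \<open>e\<^sup>-\<^sup>\<alpha>\<^sup>r\<close> decays at infinity because \<open>n + s < sqrt(v/q)\<close> means \<open>\<alpha> > 0\<close>.\<close>

definition hyp2F1_coeff :: "real \<Rightarrow> real \<Rightarrow> real \<Rightarrow> nat \<Rightarrow> real" where
  "hyp2F1_coeff a b c k = pochhammer a k * pochhammer b k / (pochhammer c k * fact k)"

definition hyp2F1_poly :: "nat \<Rightarrow> real \<Rightarrow> real \<Rightarrow> real poly" where
  "hyp2F1_poly n b c = (\<Sum>k\<le>n. monom (hyp2F1_coeff (- real n) b c k) k)"

lemma hyp2F1_coeff_eq_0:
  assumes "n < k"
  shows "hyp2F1_coeff (- real n) b c k = 0"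
  using assms pochhammer_of_nat_eq_0_iff[of n k, where 'a=real] by (simp add: hyp2F1_coeff_def)

lemma coeff_hyp2F1_poly: "coeff (hyp2F1_poly n b c) k = hyp2F1_coeff (- real n) b c k"
proof -
  have "coeff (hyp2F1_poly n b c) k = (\<Sum>j\<le>n. if j = k then hyp2F1_coeff (- real n) b c j else 0)"
    unfolding hyp2F1_poly_def coeff_sum coeff_monom by (intro sum.cong) auto
  then show ?thesis
    using hyp2F1_coeff_eq_0[of n k] by (auto simp: sum.delta)
qed

lemma hyp2F1_minus_nat_eq_poly: "hyp2F1 (- real n) b c z = poly (hyp2F1_poly n b c) z"
proof -
  have "(\<lambda>k. hyp2F1_coeff (- real n) b c k * z ^ k) sums (\<Sum>k\<le>n. hyp2F1_coeff (- real n) b c k * z ^ k)"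
    by (rule sums_finite) (auto simp: hyp2F1_coeff_eq_0)
  moreover have "poly (hyp2F1_poly n b c) z = (\<Sum>k\<le>n. hyp2F1_coeff (- real n) b c k * z ^ k)"
    unfolding hyp2F1_poly_def poly_sum poly_monom by simp
  ultimately show ?thesis
    unfolding hyp2F1_def hyp2F1_coeff_def[symmetric] by (metis sums_unique)
qed

lemma hyp2F1_coeff_Suc:
  assumes "\<And>i. c \<noteq> - real i"
  shows "hyp2F1_coeff a b c (Suc k) * (real k + 1) * (c + real k)
           = hyp2F1_coeff a b c k * (a + real k) * (b + real k)"
proof -
  have "pochhammer c k \<noteq> 0"
    using assms by (auto simp: pochhammer_eq_0_iff)
  moreover have "c + real k \<noteq> 0"
    using assms[of k] by linarith
  moreover have "hyp2F1_coeff a b c (Suc k)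
      = hyp2F1_coeff a b c k * ((a + real k) * (b + real k) / ((c + real k) * (real k + 1)))"
    unfolding hyp2F1_coeff_def pochhammer_rec' fact_Suc by (simp add: field_simps)
  ultimately show ?thesis
    by simp
qed

lemma hyp2F1_poly_ode:
  assumes "\<And>i. c \<noteq> - real i"
  shows "z * (1 - z) * poly (pderiv (pderiv (hyp2F1_poly n b c))) z
           + (c - (- real n + b + 1) * z) * poly (pderiv (hyp2F1_poly n b c)) z
           - (- real n) * b * poly (hyp2F1_poly n b c) z = 0"
proof -
  define P where "P = hyp2F1_poly n b c"
  \<comment> \<open>the left-hand side as a polynomial in \<open>z\<close>; \<open>pCons 0\<close> is multiplication by \<open>z\<close>\<close>
  define Q where "Q = pCons 0 (pderiv (pderiv P)) - pCons 0 (pCons 0 (pderiv (pderiv P)))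
     + smult c (pderiv P) - pCons 0 (smult (- real n + b + 1) (pderiv P)) - smult (- real n * b) P"
  have "Q = 0"
  proof (rule poly_eqI)
    fix k
    note rec = hyp2F1_coeff_Suc[OF assms, of "- real n" b k]
    show "coeff Q k = coeff 0 k"
      using rec unfolding Q_def P_def
      by (cases k; cases "k - 1") (simp_all add: coeff_pderiv coeff_hyp2F1_poly algebra_simps)
  qed
  then have "poly Q z = 0" by simp
  then show ?thesis
    unfolding Q_def P_def by (simp add: algebra_simps)
qed

lemma DERIV_gauge_product:
  assumes "(g has_real_derivative g x * h x) (at x)" "(h has_real_derivative k) (at x)"
    and "(u has_real_derivative u1 x) (at x)" "(u1 has_real_derivative u2) (at x)"
  shows "((\<lambda>r. g r * (h r * u r + u1 r)) has_real_derivative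
           g x * ((h x ^ 2 + k) * u x + 2 * h x * u1 x + u2)) (at x)"
  by (rule DERIV_cong[OF DERIV_mult[OF assms(1) DERIV_add[OF DERIV_mult[OF assms(2,3)] assms(4)]]])
    (simp add: power2_eq_square algebra_simps)

lemma hypergeometric_radial_identity:
  fixes z \<alpha> s a b c V F0 F1 F2 :: real
  defines "h \<equiv> - \<alpha> + s * z / (1 - z)"
  assumes "z \<noteq> 1" and "c = 1 + 2 * \<alpha>" and "a + b = 2 * \<alpha> + 2 * s"
    and "a * b = s\<^sup>2 + 2 * \<alpha> * s - V"
    and "z * (1 - z) * F2 + (c - (a + b + 1) * z) * F1 - a * b * F0 = 0"
  shows "- ((h\<^sup>2 - s * z / (1 - z)\<^sup>2) * F0 + 2 * h * (- z * F1) + (z * F1 + z\<^sup>2 * F2))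
           + (s * (s - 1) * z / (1 - z)\<^sup>2 - V * z / (1 - z)) * F0 = - \<alpha>\<^sup>2 * F0"
proof -
  define u where "u = 1 - z"
  have u: "u \<noteq> 0" "z = 1 - u"
    using assms(2) by (auto simp: u_def)
  have "(1 - z)\<^sup>2 * (- ((h\<^sup>2 - s * z / (1 - z)\<^sup>2) * F0 + 2 * h * (- z * F1) + (z * F1 + z\<^sup>2 * F2))
           + (s * (s - 1) * z / (1 - z)\<^sup>2 - V * z / (1 - z)) * F0 + \<alpha>\<^sup>2 * F0)
      = - z * (1 - z) * (z * (1 - z) * F2 + (c - (a + b + 1) * z) * F1 - a * b * F0)"
    unfolding assms(3-5) h_def u_def[symmetric] using u(1)
    by (simp add: field_simps power2_eq_square) (simp add: u(2) algebra_simps)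
  then show ?thesis
    using assms(2) unfolding assms(6) by simp
qed

lemma radial_equation_of_hypergeometric:
  fixes v q \<kappa> s \<alpha> a b c :: real and F F1 F2 :: "real \<Rightarrow> real"
  assumes q: "q > 0" and \<kappa>: "\<kappa> = q * s * (s - 1)"
    and c: "c = 1 + 2 * \<alpha>" and ab: "a + b = 2 * \<alpha> + 2 * s" "a * b = s\<^sup>2 + 2 * \<alpha> * s - v / q"
    and dF: "\<And>z. 0 < z \<Longrightarrow> z < 1 \<Longrightarrow> (F has_real_derivative F1 z) (at z)"
    and dF1: "\<And>z. 0 < z \<Longrightarrow> z < 1 \<Longrightarrow> (F1 has_real_derivative F2 z) (at z)"
    and ode: "\<And>z. 0 < z \<Longrightarrow> z < 1 \<Longrightarrow>
                z * (1 - z) * F2 z + (c - (a + b + 1) * z) * F1 z - a * b * F z = 0"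
  defines "\<psi> \<equiv> \<lambda>r. exp (- \<alpha> * r) * (1 - q * exp (- r)) powr s * F (q * exp (- r))"
  shows "\<exists>\<psi>1 \<psi>2. \<forall>r. r > ln q \<longrightarrow>
           (\<psi> has_real_derivative \<psi>1 r) (at r) \<and> (\<psi>1 has_real_derivative \<psi>2 r) (at r)
           \<and> - \<psi>2 r + potential v q \<kappa> r * \<psi> r = - \<alpha>\<^sup>2 * \<psi> r"
proof -
  define z where "z r = q * exp (- r)" for r
  define g where "g r = exp (- \<alpha> * r) * (1 - z r) powr s" for r
  define h where "h r = - \<alpha> + s * z r / (1 - z r)" for r
  define u1 where "u1 r = - z r * F1 (z r)" for r
  define u2 where "u2 r = z r * F1 (z r) + (z r)\<^sup>2 * F2 (z r)" for r
  define \<psi>1 where "\<psi>1 r = g r * (h r * F (z r) + u1 r)" for r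
  define \<psi>2 where "\<psi>2 r = g r * (((h r)\<^sup>2 - s * z r / (1 - z r)\<^sup>2) * F (z r) + 2 * h r * u1 r + u2 r)" for r
  have \<psi>_eq: "\<psi> = (\<lambda>r. g r * F (z r))"
    unfolding \<psi>_def g_def z_def by simp
  have z_range: "0 < z r" "z r < 1" if "r > ln q" for r
  proof -
    have "exp (- r) < exp (- ln q)"
      using that by simp
    then show "0 < z r" "z r < 1"
      using q by (auto simp: z_def exp_minus field_simps)
  qed
  have dz: "(z has_real_derivative - z r) (at r)" for r
    unfolding z_def by (auto intro!: derivative_eq_intros)
  have dg: "(g has_real_derivative g r * h r) (at r)" if "r > ln q" for r
  proof -
    have "0 < 1 - z r"
      using z_range[OF that] by simp
    then have "(g has_real_derivative
        - \<alpha> * exp (- \<alpha> * r) * (1 - z r) powr s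
        + exp (- \<alpha> * r) * (s * (1 - z r) powr (s - 1) * z r)) (at r)"
      unfolding g_def by (auto intro!: derivative_eq_intros dz)
    moreover have "(1 - z r) powr (s - 1) = (1 - z r) powr s / (1 - z r)"
      using \<open>0 < 1 - z r\<close> by (simp add: powr_diff)
    ultimately show ?thesis
      unfolding g_def h_def by (simp add: algebra_simps)
  qed
  have dh: "(h has_real_derivative - (s * z r / (1 - z r)\<^sup>2)) (at r)" if "r > ln q" for r
  proof -
    have "1 - z r \<noteq> 0"
      using z_range[OF that] by simp
    then show ?thesis
      unfolding h_def by (auto intro!: derivative_eq_intros dz simp: field_simps power2_eq_square)
  qed
  have du: "((\<lambda>r. F (z r)) has_real_derivative u1 r) (at r)" if "r > ln q" for r
    using DERIV_chain2[OF dF[OF z_range[OF that]] dz] by (simp add: u1_def mult.commute)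
  have du1: "(u1 has_real_derivative u2 r) (at r)" if "r > ln q" for r
    unfolding u1_def u2_def
    by (auto intro!: derivative_eq_intros dz DERIV_chain2[OF dF1[OF z_range[OF that]] dz]
        simp: power2_eq_square)
  have pot: "potential v q \<kappa> r = s * (s - 1) * z r / (1 - z r)\<^sup>2 - v / q * z r / (1 - z r)" for r
    unfolding potential_def z_def \<kappa> using q by simp
  show ?thesis
  proof (intro exI allI impI conjI)
    fix r assume r: "r > ln q"
    show "(\<psi> has_real_derivative \<psi>1 r) (at r)"
      unfolding \<psi>_eq \<psi>1_def
      by (rule DERIV_cong[OF DERIV_mult[OF dg[OF r] du[OF r]]]) (simp add: algebra_simps)
    show "(\<psi>1 has_real_derivative \<psi>2 r) (at r)"
      unfolding \<psi>1_def[abs_def] \<psi>2_def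
      using DERIV_gauge_product[OF dg[OF r] dh[OF r] du[OF r] du1[OF r]] by simp
    have "z r \<noteq> 1"
      using z_range[OF r] by simp
    note identity = hypergeometric_radial_identity[OF this c ab ode[OF z_range[OF r]]]
    show "- \<psi>2 r + potential v q \<kappa> r * \<psi> r = - \<alpha>\<^sup>2 * \<psi> r"
      using arg_cong[OF identity, of "\<lambda>x. g r * x"]
      unfolding \<psi>2_def pot \<psi>_eq h_def[symmetric] u1_def u2_def by (simp add: algebra_simps)
  qed
qed

lemma gauge_tendsto_zero:
  fixes \<alpha> q s :: real
  assumes "\<alpha> > 0" and "isCont F 0"
  shows "((\<lambda>r. exp (- \<alpha> * r) * (1 - q * exp (- r)) powr s * F (q * exp (- r))) \<longlongrightarrow> 0) at_top"
proof -
  have z: "((\<lambda>r. q * exp (- r)) \<longlongrightarrow> 0) at_top"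
    by real_asymp
  have "((\<lambda>r. exp (- \<alpha> * r)) \<longlongrightarrow> 0) at_top"
    using assms(1) by real_asymp
  moreover have "((\<lambda>r. (1 - q * exp (- r)) powr s) \<longlongrightarrow> (1 - 0) powr s) at_top"
    by (intro tendsto_powr tendsto_diff tendsto_const z) simp
  moreover have "((\<lambda>r. F (q * exp (- r))) \<longlongrightarrow> F 0) at_top"
    by (rule isCont_tendsto_compose[OF assms(2) z])
  ultimately show ?thesis
    using tendsto_mult[OF tendsto_mult] by fastforce
qed

lemma s_par_radicand_nonneg:
  fixes q \<kappa> :: real
  assumes "q > 0" and "\<kappa> \<ge> - q / 4"
  shows "\<kappa> / q + 1 / 4 \<ge> 0"
proof -
  have "(\<kappa> + q / 4) / q \<ge> 0"
    using assms by simp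
  then show ?thesis
    using assms(1) by (simp add: add_divide_distrib)
qed

lemma s_par_ge_half:
  assumes "q > 0" and "\<kappa> \<ge> - q / 4"
  shows "s_par q \<kappa> \<ge> 1 / 2"
  using s_par_radicand_nonneg[OF assms] unfolding s_par_def by simp

lemma s_par_root:
  assumes "q > 0" and "\<kappa> \<ge> - q / 4"
  shows "\<kappa> = q * s_par q \<kappa> * (s_par q \<kappa> - 1)"
proof -
  have "(sqrt (\<kappa> / q + 1 / 4))\<^sup>2 = \<kappa> / q + 1 / 4"
    using s_par_radicand_nonneg[OF assms] by simp
  then show ?thesis
    using assms(1) unfolding s_par_def by (simp add: power2_eq_square field_simps)
qed

lemma s_par_integer:
  assumes "q \<noteq> 0"
  shows "s_par q (q * real j * (real j + 1)) = real j + 1"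
proof -
  have "q * real j * (real j + 1) / q + 1 / 4 = (real j + 1 / 2)\<^sup>2"
    using assms by (simp add: field_simps power2_eq_square)
  then show ?thesis
    unfolding s_par_def by simp
qed

lemma less_divide_of_less_sqrt:
  fixes m x :: real
  assumes "0 < m" and "m < sqrt x"
  shows "m < x / m"
proof -
  have "0 < sqrt x"
    using assms by linarith
  have "m\<^sup>2 < (sqrt x)\<^sup>2"
    using assms by (intro power_strict_mono) auto
  also have "\<dots> = x"
    using \<open>0 < sqrt x\<close> by simp
  finally show ?thesis
    using assms(1) by (simp add: field_simps power2_eq_square)
qed

lemma radial_hypergeometric_parameters:
  fixes v q s m \<alpha> b c :: real and n :: nat
  assumes "m = real n + s" and "m > 0" and "q > 0"
    and "\<alpha> = v / (2 * q * m) - m / 2" and "b = s + v / (q * m)" and "c = 1 - real n - s + v / (q * m)"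
  shows "c = 1 + 2 * \<alpha>" and "- real n + b = 2 * \<alpha> + 2 * s"
    and "- real n * b = s\<^sup>2 + 2 * \<alpha> * s - v / q"
proof -
  have "real n = m - s"
    using assms(1) by simp
  then show "c = 1 + 2 * \<alpha>" and "- real n + b = 2 * \<alpha> + 2 * s"
    and "- real n * b = s\<^sup>2 + 2 * \<alpha> * s - v / q"
    using assms(2,3) unfolding assms(4-6) by (auto simp: field_simps power2_eq_square)
qed

theorem mainTheorem4:
  fixes v q \<kappa> :: real and n :: nat
  assumes "v > 0" and "q > 0" and "\<kappa> \<ge> - q / 4"
    and "real n + s_par q \<kappa> < sqrt (v / q)"
  shows "(\<exists>\<psi>1 \<psi>2. \<forall>r. r > ln q \<longrightarrow>
            (psi_n v q \<kappa> n has_real_derivative \<psi>1 r) (at r)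
          \<and> (\<psi>1 has_real_derivative \<psi>2 r) (at r)
          \<and> - \<psi>2 r + potential v q \<kappa> r * psi_n v q \<kappa> n r = E_n v q \<kappa> n * psi_n v q \<kappa> n r)
    \<and> psi_n v q \<kappa> n (ln q) = 0
    \<and> (psi_n v q \<kappa> n \<longlongrightarrow> 0) at_top
    \<and> (\<forall>j::nat. \<kappa> = q * real j * (real j + 1) \<longrightarrow>
          s_par q \<kappa> = real j + 1
        \<and> E_n v q \<kappa> n = - ((v / (2 * q * (real n + real j + 1)) - (real n + real j + 1) / 2) ^ 2))"
proof -
  define s where "s = s_par q \<kappa>"
  define m where "m = real n + s"
  define \<alpha> where "\<alpha> = v / (2 * q * m) - m / 2"
  define b where "b = s + v / (q * m)"
  define c where "c = 1 - real n - s + v / (q * m)"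
  have s: "s \<ge> 1 / 2" "\<kappa> = q * s * (s - 1)"
    unfolding s_def using s_par_ge_half s_par_root assms(2,3) by blast+
  have "m > 0"
    using s(1) by (simp add: m_def)
  have "\<alpha> > 0"
    using less_divide_of_less_sqrt[OF \<open>m > 0\<close> assms(4)[folded s_def, folded m_def]] assms(2)
    by (simp add: \<alpha>_def field_simps)
  note params = radial_hypergeometric_parameters[OF m_def \<open>m > 0\<close> assms(2) \<alpha>_def b_def c_def]
  have c_not_nonpos_int: "c \<noteq> - real i" for i
    using \<open>\<alpha> > 0\<close> params(1) by simp
  let ?P = "hyp2F1_poly n b c"
  have \<psi>: "psi_n v q \<kappa> n = (\<lambda>r. exp (- \<alpha> * r) * (1 - q * exp (- r)) powr s * poly ?P (q * exp (- r)))"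
    unfolding psi_n_def Let_def s_def[symmetric] m_def[symmetric] hyp2F1_minus_nat_eq_poly
    by (simp add: \<alpha>_def b_def c_def m_def)
  have E: "E_n v q \<kappa> n = - \<alpha>\<^sup>2"
    unfolding E_n_def s_def[symmetric] m_def[symmetric] \<alpha>_def by simp
  have "\<exists>\<psi>1 \<psi>2. \<forall>r. r > ln q \<longrightarrow>
            (psi_n v q \<kappa> n has_real_derivative \<psi>1 r) (at r)
          \<and> (\<psi>1 has_real_derivative \<psi>2 r) (at r)
          \<and> - \<psi>2 r + potential v q \<kappa> r * psi_n v q \<kappa> n r = E_n v q \<kappa> n * psi_n v q \<kappa> n r"
    unfolding \<psi> E
    by (rule radial_equation_of_hypergeometric[OF assms(2) s(2) params poly_DERIV poly_DERIV
          hyp2F1_poly_ode[OF c_not_nonpos_int]])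
  \<comment> \<open>\<open>0 powr s = 0\<close> for every \<open>s\<close> in Isabelle; here it is also the true value since \<open>s \<ge> 1/2\<close>\<close>
  moreover have "psi_n v q \<kappa> n (ln q) = 0"
    unfolding \<psi> using assms(2) by (simp add: exp_minus)
  moreover have "(psi_n v q \<kappa> n \<longlongrightarrow> 0) at_top"
    unfolding \<psi> using gauge_tendsto_zero[OF \<open>\<alpha> > 0\<close> poly_isCont] .
  moreover have "s_par q \<kappa> = real j + 1
        \<and> E_n v q \<kappa> n = - ((v / (2 * q * (real n + real j + 1)) - (real n + real j + 1) / 2) ^ 2)"
    if "\<kappa> = q * real j * (real j + 1)" for j
    using s_par_integer[of q j] assms(2) unfolding that E_n_def by (simp add: add.assoc)
  ultimately show ?thesis
    by blast
qed

end
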